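(* Let $N$ be a smooth positive function on an open interval of positive $r$-values, let $a$ be a constant such that $F(r)=\int_a^r\frac{1}{N(\mu)}\,\mathrm{d}\mu$ is defined and has a smooth inverse $F^{-1}$ defined on an open interval $I$, and set $b_1(t)=N(F^{-1}(t))$, $b_2(t)=F^{-1}(t)$ for $t\in I$. Consider the $(2+1)$-dimensional Lorentzian multiply warped product $I\times{}_{b_1}F_1\times{}_{b_2}F_2$ with $F_1,F_2$ one-dimensional Riemannian manifolds with coordinates $x,\phi$ and metric $\mathrm{d}s^2=-\mathrm{d}t^2+b_1^2(t)\,\mathrm{d}x^2+b_2^2(t)\,\mathrm{d}\phi^2$. Then this space-time has constant scalar curvature $\tau=\lambda$ if and only if the square lapse function has the form $$N^2(r)=-\frac{c_1}{r}+\frac{\lambda}{6}r^2+c_2$$ for suitable constants $c_1,c_2$.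
   Context: Curvature sign conventions are those of O'Neill's "Semi-Riemannian geometry" (so that, e.g., the de Sitter space has positive scalar curvature). *)

theory Defs
  imports "HOL-Analysis.Analysis"
begin

definition Cinf_on :: "real set \<Rightarrow> (real \<Rightarrow> real) \<Rightarrow> bool" where
  "Cinf_on S f \<longleftrightarrow> (\<exists>D :: nat \<Rightarrow> real \<Rightarrow> real. D 0 = f \<and>
      (\<forall>k. \<forall>x\<in>S. (D k has_real_derivative D (Suc k) x) (at x)))"

text \<open>Coordinate calculus for a metric tensor on an n-dimensional chart.
Points are maps nat => real (only coordinates 0..n-1 matter);
a metric is g p i j.\<close>

definition pd :: "nat \<Rightarrow> ((nat \<Rightarrow> real) \<Rightarrow> real) \<Rightarrow> (nat \<Rightarrow> real) \<Rightarrow> real" where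
  "pd i f p = deriv (\<lambda>s. f (p(i := s))) (p i)"

definition inv_metric ::
  "nat \<Rightarrow> ((nat \<Rightarrow> real) \<Rightarrow> nat \<Rightarrow> nat \<Rightarrow> real) \<Rightarrow> (nat \<Rightarrow> real) \<Rightarrow> nat \<Rightarrow> nat \<Rightarrow> real" where
  "inv_metric n g p = (SOME h. \<forall>i<n. \<forall>k<n.
      (\<Sum>j<n. g p i j * h j k) = (if i = k then 1 else 0))"

definition christoffel ::
  "nat \<Rightarrow> ((nat \<Rightarrow> real) \<Rightarrow> nat \<Rightarrow> nat \<Rightarrow> real) \<Rightarrow> nat \<Rightarrow> nat \<Rightarrow> nat \<Rightarrow> (nat \<Rightarrow> real) \<Rightarrow> real" where
  "christoffel n g k i j p = (\<Sum>l<n. inv_metric n g p k l *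
      (pd i (\<lambda>q. g q j l) p + pd j (\<lambda>q. g q i l) p - pd l (\<lambda>q. g q i j) p)) / 2"

text \<open>Ricci tensor R_{ij} = d_k Gamma^k_{ij} - d_j Gamma^k_{ik}
  + Gamma^k_{kl} Gamma^l_{ij} - Gamma^k_{jl} Gamma^l_{ik}
  (sign convention giving positive scalar curvature to spheres / de Sitter, as in O'Neill).\<close>
definition ricci ::
  "nat \<Rightarrow> ((nat \<Rightarrow> real) \<Rightarrow> nat \<Rightarrow> nat \<Rightarrow> real) \<Rightarrow> nat \<Rightarrow> nat \<Rightarrow> (nat \<Rightarrow> real) \<Rightarrow> real" where
  "ricci n g i j p = (\<Sum>k<n. pd k (christoffel n g k i j) p - pd j (christoffel n g k i k) p
      + (\<Sum>l<n. christoffel n g k k l p * christoffel n g l i j p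
               - christoffel n g k j l p * christoffel n g l i k p))"

definition scalar_curvature ::
  "nat \<Rightarrow> ((nat \<Rightarrow> real) \<Rightarrow> nat \<Rightarrow> nat \<Rightarrow> real) \<Rightarrow> (nat \<Rightarrow> real) \<Rightarrow> real" where
  "scalar_curvature n g p = (\<Sum>i<n. \<Sum>j<n. inv_metric n g p i j * ricci n g i j p)"

text \<open>The metric -dt^2 + b1(t)^2 dx^2 + b2(t)^2 dphi^2 in coordinates (t,x,phi) = (p 0, p 1, p 2).\<close>
definition mwp_metric ::
  "(real \<Rightarrow> real) \<Rightarrow> (real \<Rightarrow> real) \<Rightarrow> (nat \<Rightarrow> real) \<Rightarrow> nat \<Rightarrow> nat \<Rightarrow> real" where
  "mwp_metric b1 b2 q i j =
     (if i \<noteq> j then 0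
      else if i = 0 then -1
      else if i = 1 then (b1 (q 0))\<^sup>2
      else if i = 2 then (b2 (q 0))\<^sup>2
      else 0)"

end

theory Submission imports Defs begin

(* In the chart (t, x, phi) the metric depends on t only, and a direct computation gives the
  scalar curvature 2 (b1''/b1 + b2''/b2 + b1' b2' / (b1 b2)). Since b2 = F^-1 inverts F' = 1/N,
  b2' = N(b2), so r = b2(t) is a coordinate with d/dt = N d/dr and b1 = N(r). In terms of u = N^2
  the curvature becomes u'' + 2 u'/r = r^-2 (r^2 u')', and tau = lambda integrates twice to
  u = - c1/r + lambda r^2/6 + c2. *)

lemma pd_of_time_function:
  assumes "open I" "p 0 \<in> I" "\<And>q. q 0 \<in> I \<Longrightarrow> f q = \<phi> (q 0)"
    and "(\<phi> has_real_derivative \<phi>') (at (p 0))"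
  shows "pd i f p = (if i = 0 then \<phi>' else 0)"
proof (cases "i = 0")
  case True
  have "((\<lambda>s. f (p(i := s))) has_real_derivative \<phi>') (at (p i))"
    using has_field_derivative_transform_within_open[OF assms(4) assms(1) assms(2)] assms(3) True
    by force
  then show ?thesis unfolding pd_def using True DERIV_imp_deriv by simp
next
  case False
  have "(\<lambda>s. f (p(i := s))) = (\<lambda>s. \<phi> (p 0))" using False assms(2,3) by auto
  then show ?thesis unfolding pd_def using False by simp
qed

lemma less_3_cases: "(k::nat) < 3 \<longleftrightarrow> k = 0 \<or> k = 1 \<or> k = 2" by auto

lemma sum_lessThan_3: "(\<Sum>k<(3::nat). f k) = f 0 + f 1 + (f 2 :: real)"
  by (simp add: numeral_3_eq_3 numeral_2_eq_2)

locale mwp_chart =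
  fixes b1 b2 b1' b2' b1'' b2'' :: "real \<Rightarrow> real" and I :: "real set"
  assumes open_I: "open I"
    and warps_nonzero: "\<And>t. t \<in> I \<Longrightarrow> b1 t \<noteq> 0 \<and> b2 t \<noteq> 0"
    and b1_deriv: "\<And>t. t \<in> I \<Longrightarrow> (b1 has_real_derivative b1' t) (at t)"
    and b2_deriv: "\<And>t. t \<in> I \<Longrightarrow> (b2 has_real_derivative b2' t) (at t)"
    and b1'_deriv: "\<And>t. t \<in> I \<Longrightarrow> (b1' has_real_derivative b1'' t) (at t)"
    and b2'_deriv: "\<And>t. t \<in> I \<Longrightarrow> (b2' has_real_derivative b2'' t) (at t)"
begin

definition metric_inverse :: "real \<Rightarrow> nat \<Rightarrow> nat \<Rightarrow> real" where
  "metric_inverse t j k = (if j \<noteq> k then 0 else if j = 0 then -1 else if j = 1 then 1 / (b1 t)\<^sup>2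
     else if j = 2 then 1 / (b2 t)\<^sup>2 else 0)"

lemma inv_metric_eq:
  assumes "q 0 \<in> I" "j < 3" "k < 3"
  shows "inv_metric 3 (mwp_metric b1 b2) q j k = metric_inverse (q 0) j k"
proof -
  let ?P = "\<lambda>h. \<forall>i<3. \<forall>k<3. (\<Sum>j<3. mwp_metric b1 b2 q i j * h j k) = (if i = k then 1 else 0)"
  have "?P (metric_inverse (q 0))" using warps_nonzero[OF assms(1)]
    by (auto simp: sum_lessThan_3 less_3_cases mwp_metric_def metric_inverse_def power2_eq_square)
  then have "?P (inv_metric 3 (mwp_metric b1 b2) q)"
    unfolding inv_metric_def by (rule someI[of ?P])
  then have "(\<Sum>l<3. mwp_metric b1 b2 q j l * inv_metric 3 (mwp_metric b1 b2) q l k) = (if j = k then 1 else 0)"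
    using assms by blast
  then show ?thesis using warps_nonzero[OF assms(1)] assms(2,3)
    by (auto simp: sum_lessThan_3 less_3_cases mwp_metric_def metric_inverse_def field_simps)
qed

definition metric_deriv :: "nat \<Rightarrow> nat \<Rightarrow> real \<Rightarrow> real" where
  "metric_deriv j l t = (if j \<noteq> l then 0 else if j = 1 then 2 * b1 t * b1' t
     else if j = 2 then 2 * b2 t * b2' t else 0)"

lemma pd_metric:
  assumes "q 0 \<in> I"
  shows "pd i (\<lambda>q. mwp_metric b1 b2 q j l) q = (if i = 0 then metric_deriv j l (q 0) else 0)"
proof (rule pd_of_time_function[where I=I and \<phi> = "\<lambda>t. mwp_metric b1 b2 (\<lambda>_. t) j l"])
  show "((\<lambda>t. mwp_metric b1 b2 (\<lambda>_. t) j l) has_real_derivative metric_deriv j l (q 0)) (at (q 0))"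
    using b1_deriv[OF assms] b2_deriv[OF assms]
    unfolding mwp_metric_def metric_deriv_def
    by (cases "j = l"; cases "l = 0"; cases "l = 1"; cases "l = 2"; auto intro!: derivative_eq_intros)
qed (simp_all add: mwp_metric_def open_I assms)

definition chr :: "nat \<Rightarrow> nat \<Rightarrow> nat \<Rightarrow> real \<Rightarrow> real" where
  "chr k i j = (if k = 0 \<and> i = 1 \<and> j = 1 then (\<lambda>t. b1 t * b1' t)
     else if k = 0 \<and> i = 2 \<and> j = 2 then (\<lambda>t. b2 t * b2' t)
     else if k = 1 \<and> ((i = 0 \<and> j = 1) \<or> (i = 1 \<and> j = 0)) then (\<lambda>t. b1' t / b1 t)
     else if k = 2 \<and> ((i = 0 \<and> j = 2) \<or> (i = 2 \<and> j = 0)) then (\<lambda>t. b2' t / b2 t)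
     else (\<lambda>t. 0))"

definition chr_deriv :: "nat \<Rightarrow> nat \<Rightarrow> nat \<Rightarrow> real \<Rightarrow> real" where
  "chr_deriv k i j = (if k = 0 \<and> i = 1 \<and> j = 1 then (\<lambda>t. b1' t * b1' t + b1 t * b1'' t)
     else if k = 0 \<and> i = 2 \<and> j = 2 then (\<lambda>t. b2' t * b2' t + b2 t * b2'' t)
     else if k = 1 \<and> ((i = 0 \<and> j = 1) \<or> (i = 1 \<and> j = 0))
       then (\<lambda>t. (b1'' t * b1 t - b1' t * b1' t) / (b1 t)\<^sup>2)
     else if k = 2 \<and> ((i = 0 \<and> j = 2) \<or> (i = 2 \<and> j = 0))
       then (\<lambda>t. (b2'' t * b2 t - b2' t * b2' t) / (b2 t)\<^sup>2)
     else (\<lambda>t. 0))"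

lemma chr_has_derivative:
  assumes "t \<in> I"
  shows "(chr k i j has_real_derivative chr_deriv k i j t) (at t)"
  using b1_deriv[OF assms] b2_deriv[OF assms] b1'_deriv[OF assms] b2'_deriv[OF assms]
    warps_nonzero[OF assms]
  unfolding chr_def chr_deriv_def
  by (auto intro!: derivative_eq_intros simp: field_simps power2_eq_square)

lemma christoffel_eq:
  assumes "q 0 \<in> I" "k < 3" "i < 3" "j < 3"
  shows "christoffel 3 (mwp_metric b1 b2) k i j q = chr k i j (q 0)"
  using assms warps_nonzero[OF assms(1)]
  unfolding christoffel_def
  by (auto simp: sum_lessThan_3 less_3_cases pd_metric inv_metric_eq chr_def metric_inverse_def
      metric_deriv_def field_simps power2_eq_square)

lemma pd_christoffel:
  assumes "p 0 \<in> I" "k < 3" "i < 3" "j < 3"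
  shows "pd m (christoffel 3 (mwp_metric b1 b2) k i j) p = (if m = 0 then chr_deriv k i j (p 0) else 0)"
  by (rule pd_of_time_function[where I=I and \<phi> = "chr k i j"])
    (use assms christoffel_eq chr_has_derivative open_I in auto)

lemma ricci_eq:
  assumes "p 0 \<in> I" "i < 3" "j < 3"
  shows "ricci 3 (mwp_metric b1 b2) i j p =
    (\<Sum>k<3. (if k = 0 then chr_deriv k i j (p 0) else 0) - (if j = 0 then chr_deriv k i k (p 0) else 0)
      + (\<Sum>l<3. chr k k l (p 0) * chr l i j (p 0) - chr k j l (p 0) * chr l i k (p 0)))"
  unfolding ricci_def
  by (intro sum.cong refl) (use assms in \<open>simp add: pd_christoffel christoffel_eq\<close>)

lemma scalar_curvature_eq:
  assumes "p 0 \<in> I"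
  shows "scalar_curvature 3 (mwp_metric b1 b2) p =
    2 * (b1'' (p 0) / b1 (p 0) + b2'' (p 0) / b2 (p 0) + b1' (p 0) * b2' (p 0) / (b1 (p 0) * b2 (p 0)))"
  using assms warps_nonzero[OF assms]
  unfolding scalar_curvature_def
  by (simp add: sum_lessThan_3 inv_metric_eq ricci_eq metric_inverse_def chr_def chr_deriv_def
      field_simps power2_eq_square)

end


lemma has_real_derivative_signed_integral:
  fixes f F :: "real \<Rightarrow> real" and J :: "real set"
  assumes J: "open J" "is_interval J" and a: "a \<in> J" and r: "r \<in> J"
    and cont: "continuous_on J f"
    and F: "\<forall>x\<in>J. F x = (if a \<le> x then integral {a..x} f else - integral {x..a} f)"
  shows "(F has_real_derivative f r) (at r)"
proof -
  obtain ea where ea: "ea > 0" "ball a ea \<subseteq> J" using J(1) a open_contains_ball by blast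
  obtain er where er: "er > 0" "ball r er \<subseteq> J" using J(1) r open_contains_ball by blast
  define c where "c = min (a - ea/2) (r - er/2)"
  define d where "d = max (a + ea/2) (r + er/2)"
  have "c \<in> J" unfolding c_def using ea er by (auto simp: min_def dist_real_def subset_eq)
  moreover have "d \<in> J" unfolding d_def using ea er by (auto simp: max_def dist_real_def subset_eq)
  ultimately have cd_J: "{c..d} \<subseteq> J" using J(2) by (meson is_interval_1 atLeastAtMost_iff subsetI)
  have inside: "c < a" "a < d" "c < r" "r < d" unfolding c_def d_def using ea er by auto
  have cont_cd: "continuous_on {c..d} f" using cont cd_J continuous_on_subset by blast
  have int: "f integrable_on {c..d}" using cont_cd integrable_continuous_interval by blast
  define H where "H x = integral {c..x} f" for x
  have F_eq_H: "F x = H x - H a" if "x \<in> {c<..<d}" for x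
  proof -
    have F_x: "F x = (if a \<le> x then integral {a..x} f else - integral {x..a} f)"
      using F cd_J that by (simp add: subset_iff)
    show ?thesis
    proof (cases "a \<le> x")
      case True
      then have "integral {c..a} f + integral {a..x} f = H x"
        unfolding H_def using inside that integrable_on_subinterval[OF int]
        by (intro Henstock_Kurzweil_Integration.integral_combine) auto
      then show ?thesis using F_x True unfolding H_def by auto
    next
      case False
      then have "integral {c..x} f + integral {x..a} f = H a"
        unfolding H_def using inside that integrable_on_subinterval[OF int]
        by (intro Henstock_Kurzweil_Integration.integral_combine) auto
      then show ?thesis using F_x False unfolding H_def by auto
    qed
  qed
  have "(H has_real_derivative f r) (at r within {c..d})"
    unfolding H_def by (rule integral_has_real_derivative[OF cont_cd]) (use inside in auto)
  then have "(H has_real_derivative f r) (at r)"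
    using at_within_interior[of r "{c..d}"] inside by auto
  then have "((\<lambda>x. H x - H a) has_real_derivative f r) (at r)"
    by (auto intro!: derivative_eq_intros)
  then show ?thesis
    by (rule has_field_derivative_transform_within_open[where S="{c<..<d}"]) (use inside F_eq_H in auto)
qed

lemma has_real_derivative_unique_on_open:
  assumes "open S" "x \<in> S" "\<And>y. y \<in> S \<Longrightarrow> f y = g y"
    and "(f has_real_derivative f') (at x)" "(g has_real_derivative g') (at x)"
  shows "f' = g'"
proof -
  have "(f has_real_derivative g') (at x)"
    using has_field_derivative_transform_within_open[OF assms(5,1,2)] assms(3) by metis
  then show ?thesis using assms(4) DERIV_unique by blast
qed

lemma radial_laplacian_eq_const_solution:
  fixes u u' u'' :: "real \<Rightarrow> real" and J :: "real set"
  assumes J: "is_interval J" "J \<subseteq> {0<..}"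
    and u': "\<And>r. r \<in> J \<Longrightarrow> (u has_real_derivative u' r) (at r)"
    and u'': "\<And>r. r \<in> J \<Longrightarrow> (u' has_real_derivative u'' r) (at r)"
    and ode: "\<forall>r\<in>J. u'' r + 2 * u' r / r = lam"
  shows "\<exists>c1 c2. \<forall>r\<in>J. u r = - c1 / r + lam / 6 * r\<^sup>2 + c2"
proof -
  have "convex J" using J(1) is_interval_convex by blast
  have "\<exists>c1. \<forall>r\<in>J. r\<^sup>2 * u' r - lam / 3 * r ^ 3 = c1"
  proof (rule has_field_derivative_zero_constant[OF \<open>convex J\<close>])
    fix r assume r: "r \<in> J"
    have "((\<lambda>r. r\<^sup>2 * u' r - lam / 3 * r ^ 3) has_real_derivative
        r\<^sup>2 * (u'' r + 2 * u' r / r - lam)) (at r)"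
      using u''[OF r] J(2) r
      by (auto intro!: derivative_eq_intros simp: field_simps power2_eq_square power3_eq_cube)
    then show "((\<lambda>r. r\<^sup>2 * u' r - lam / 3 * r ^ 3) has_real_derivative 0) (at r within J)"
      using ode r by (simp add: has_field_derivative_at_within)
  qed
  then obtain c1 where c1: "\<And>r. r \<in> J \<Longrightarrow> r\<^sup>2 * u' r - lam / 3 * r ^ 3 = c1" by blast
  have "\<exists>c2. \<forall>r\<in>J. u r + c1 / r - lam / 6 * r\<^sup>2 = c2"
  proof (rule has_field_derivative_zero_constant[OF \<open>convex J\<close>])
    fix r assume r: "r \<in> J"
    have "r > 0" using r J(2) by auto
    have "((\<lambda>r. u r + c1 / r - lam / 6 * r\<^sup>2) has_real_derivative
        (r\<^sup>2 * u' r - lam / 3 * r ^ 3 - c1) / r\<^sup>2) (at r)"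
      using u'[OF r] \<open>r > 0\<close>
      by (auto intro!: derivative_eq_intros simp: field_simps power2_eq_square power3_eq_cube)
    then show "((\<lambda>r. u r + c1 / r - lam / 6 * r\<^sup>2) has_real_derivative 0) (at r within J)"
      using c1[OF r] by (simp add: has_field_derivative_at_within)
  qed
  then obtain c2 where "\<And>r. r \<in> J \<Longrightarrow> u r + c1 / r - lam / 6 * r\<^sup>2 = c2" by blast
  then have "\<forall>r\<in>J. u r = - c1 / r + lam / 6 * r\<^sup>2 + c2" by (auto simp: algebra_simps)
  then show ?thesis by blast
qed

lemma radial_laplacian_of_solution:
  fixes u u' u'' :: "real \<Rightarrow> real" and J :: "real set"
  assumes J: "open J" "J \<subseteq> {0<..}"
    and u': "\<And>r. r \<in> J \<Longrightarrow> (u has_real_derivative u' r) (at r)"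
    and u'': "\<And>r. r \<in> J \<Longrightarrow> (u' has_real_derivative u'' r) (at r)"
    and u_eq: "\<And>r. r \<in> J \<Longrightarrow> u r = - c1 / r + lam / 6 * r\<^sup>2 + c2"
    and r: "r \<in> J"
  shows "u'' r + 2 * u' r / r = lam"
proof -
  have u'_eq: "u' s = c1 / s\<^sup>2 + lam / 3 * s" if s: "s \<in> J" for s
  proof (rule has_real_derivative_unique_on_open[OF J(1) s u_eq u'[OF s]])
    show "((\<lambda>r. - c1 / r + lam / 6 * r\<^sup>2 + c2) has_real_derivative c1 / s\<^sup>2 + lam / 3 * s) (at s)"
      using s J(2) by (auto intro!: derivative_eq_intros simp: field_simps power2_eq_square)
  qed
  have "u'' r = - 2 * c1 / r ^ 3 + lam / 3"
  proof (rule has_real_derivative_unique_on_open[OF J(1) r u'_eq u''[OF r]])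
    show "((\<lambda>r. c1 / r\<^sup>2 + lam / 3 * r) has_real_derivative - 2 * c1 / r ^ 3 + lam / 3) (at r)"
      using r J(2)
      by (auto intro!: derivative_eq_intros simp: field_simps power2_eq_square power3_eq_cube)
  qed
  then show ?thesis
    using u'_eq[OF r] r J(2) by (auto simp: field_simps power2_eq_square power3_eq_cube)
qed

lemma radial_laplacian_eq_const_iff:
  fixes u u' u'' :: "real \<Rightarrow> real" and J :: "real set"
  assumes J: "open J" "is_interval J" "J \<subseteq> {0<..}"
    and u': "\<And>r. r \<in> J \<Longrightarrow> (u has_real_derivative u' r) (at r)"
    and u'': "\<And>r. r \<in> J \<Longrightarrow> (u' has_real_derivative u'' r) (at r)"
  shows "(\<forall>r\<in>J. u'' r + 2 * u' r / r = lam)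
     \<longleftrightarrow> (\<exists>c1 c2. \<forall>r\<in>J. u r = - c1 / r + lam / 6 * r\<^sup>2 + c2)"
  using radial_laplacian_eq_const_solution[OF J(2,3) u' u'']
    radial_laplacian_of_solution[OF J(1,3) u' u'']
  by blast

lemma Cinf_on_second_derivative:
  assumes "Cinf_on S f"
  obtains f' f'' where "\<And>x. x \<in> S \<Longrightarrow> (f has_real_derivative f' x) (at x)"
    and "\<And>x. x \<in> S \<Longrightarrow> (f' has_real_derivative f'' x) (at x)"
proof -
  obtain D where D: "D 0 = f" "\<And>k x. x \<in> S \<Longrightarrow> (D k has_real_derivative D (Suc k) x) (at x)"
    using assms unfolding Cinf_on_def by blast
  show ?thesis
    by (rule that[of "D 1" "D 2"]) (use D(1) D(2)[of _ 0] D(2)[of _ 1] in \<open>auto simp: numeral_2_eq_2\<close>)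
qed

lemma inverse_function_derivative_mult_eq_1:
  assumes "open I" "t \<in> I" "\<And>s. s \<in> I \<Longrightarrow> F (G s) = s"
    and "(F has_real_derivative F') (at (G t))" "(G has_real_derivative G') (at t)"
  shows "F' * G' = 1"
proof (rule has_real_derivative_unique_on_open[OF assms(1,2)])
  show "((\<lambda>s. F (G s)) has_real_derivative F' * G') (at t)"
    using DERIV_chain2[OF assms(4,5)] .
qed (use assms(3) in auto)

lemma inverse_of_reciprocal_integral:
  fixes N F G G' :: "real \<Rightarrow> real" and J :: "real set"
  assumes J: "open J" "is_interval J" and "a \<in> J"
    and N: "continuous_on J N" "\<And>r. r \<in> J \<Longrightarrow> N r \<noteq> 0"
    and F: "\<forall>r\<in>J. F r = (if a \<le> r then integral {a..r} (\<lambda>\<mu>. 1 / N \<mu>)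
                              else - integral {r..a} (\<lambda>\<mu>. 1 / N \<mu>))"
    and G_F: "\<forall>r\<in>J. G (F r) = r" and F_G: "\<forall>t\<in>F ` J. F (G t) = t"
    and G': "\<And>t. t \<in> F ` J \<Longrightarrow> (G has_real_derivative G' t) (at t)"
  shows "open (F ` J)" and "\<And>t. t \<in> F ` J \<Longrightarrow> (G has_real_derivative N (G t)) (at t)"
proof -
  have "continuous_on J (\<lambda>\<mu>. 1 / N \<mu>)"
    using N by (intro continuous_intros) auto
  then have F': "(F has_real_derivative 1 / N r) (at r)" if "r \<in> J" for r
    using has_real_derivative_signed_integral[OF J \<open>a \<in> J\<close> that] F by blast
  have "continuous_on J F" using F' DERIV_isCont continuous_at_imp_continuous_on by blast
  moreover have "inj_on F J" using G_F by (metis inj_onI)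
  ultimately show open_image: "open (F ` J)" using invariance_of_domain J(1) by blast
  fix t assume t: "t \<in> F ` J"
  then have "G t \<in> J" using G_F by auto
  have "1 / N (G t) * G' t = 1"
    by (rule inverse_function_derivative_mult_eq_1[OF open_image t _ F'[OF \<open>G t \<in> J\<close>] G'[OF t]])
      (use F_G in auto)
  then show "(G has_real_derivative N (G t)) (at t)"
    using G'[OF t] N(2)[OF \<open>G t \<in> J\<close>] by (simp add: field_simps)
qed

lemma scalar_curvature_lapse_warped:
  fixes N N' N'' G :: "real \<Rightarrow> real" and I J :: "real set"
  assumes "open I" and G_J: "\<And>t. t \<in> I \<Longrightarrow> G t \<in> J"
    and nonzero: "\<And>r. r \<in> J \<Longrightarrow> r \<noteq> 0 \<and> N r \<noteq> 0"
    and G': "\<And>t. t \<in> I \<Longrightarrow> (G has_real_derivative N (G t)) (at t)"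
    and N': "\<And>r. r \<in> J \<Longrightarrow> (N has_real_derivative N' r) (at r)"
    and N'': "\<And>r. r \<in> J \<Longrightarrow> (N' has_real_derivative N'' r) (at r)"
    and "p 0 \<in> I" and r: "G (p 0) = r"
  shows "scalar_curvature 3 (mwp_metric (\<lambda>t. N (G t)) G) p =
    2 * (N' r * N' r + N r * N'' r) + 2 * (2 * N r * N' r) / r"
proof -
  interpret mwp_chart "\<lambda>t. N (G t)" G "\<lambda>t. N' (G t) * N (G t)" "\<lambda>t. N (G t)"
    "\<lambda>t. (N'' (G t) * N (G t) + N' (G t) * N' (G t)) * N (G t)" "\<lambda>t. N' (G t) * N (G t)" I
  proof
    fix t assume t: "t \<in> I"
    show "N (G t) \<noteq> 0 \<and> G t \<noteq> 0" using nonzero G_J t by blast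
    show "((\<lambda>t. N (G t)) has_real_derivative N' (G t) * N (G t)) (at t)"
      using DERIV_chain2[OF N' G'] G_J t by blast
    then show "((\<lambda>t. N' (G t) * N (G t)) has_real_derivative
        (N'' (G t) * N (G t) + N' (G t) * N' (G t)) * N (G t)) (at t)"
      using DERIV_chain2[OF N'' G'] G_J t
      by (auto intro!: derivative_eq_intros simp: algebra_simps)
  qed (use \<open>open I\<close> G' in auto)
  have "r \<noteq> 0" "N r \<noteq> 0" using nonzero G_J \<open>p 0 \<in> I\<close> r by auto
  have "scalar_curvature 3 (mwp_metric (\<lambda>t. N (G t)) G) p =
    2 * ((N'' r * N r + N' r * N' r) * N r / N r + N' r * N r / r + N' r * N r * N r / (N r * r))"
    using scalar_curvature_eq[of p, OF \<open>p 0 \<in> I\<close>] unfolding r .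
  also have "\<dots> = 2 * (N' r * N' r + N r * N'' r) + 2 * (2 * N r * N' r) / r"
    using \<open>r \<noteq> 0\<close> \<open>N r \<noteq> 0\<close> by (simp add: field_simps)
  finally show ?thesis .
qed

lemma eq_const_on_chart_iff:
  assumes "G ` I = J" and "\<And>p r. p 0 \<in> I \<Longrightarrow> G (p 0) = r \<Longrightarrow> f p = g r"
  shows "(\<forall>p :: nat \<Rightarrow> 'a. p 0 \<in> I \<longrightarrow> f p = c) \<longleftrightarrow> (\<forall>r\<in>J. g r = c)"
proof (intro iffI ballI allI impI)
  fix r assume const: "\<forall>p :: nat \<Rightarrow> 'a. p 0 \<in> I \<longrightarrow> f p = c" and "r \<in> J"
  then obtain t where "t \<in> I" "G t = r" using assms(1) by blast
  then show "g r = c" using const assms(2)[of "\<lambda>_. t" r] by simp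
next
  fix p :: "nat \<Rightarrow> 'a" assume "\<forall>r\<in>J. g r = c" "p 0 \<in> I"
  moreover have "G (p 0) \<in> J" using assms(1) \<open>p 0 \<in> I\<close> by blast
  ultimately show "f p = c" using assms(2)[of p, OF \<open>p 0 \<in> I\<close> refl] by simp
qed

theorem proposition6p3:
  fixes N F G :: "real \<Rightarrow> real" and J I :: "real set" and a lam :: real
  assumes "open J" and "is_interval J" and "J \<noteq> {}" and "J \<subseteq> {0<..}"
    and "Cinf_on J N" and "\<forall>r\<in>J. N r > 0"
    and "a \<in> J"
    and "\<forall>r\<in>J. F r = (if a \<le> r then integral {a..r} (\<lambda>\<mu>. 1 / N \<mu>)
                                  else - integral {r..a} (\<lambda>\<mu>. 1 / N \<mu>))"
    and "I = F ` J"
    and "Cinf_on I G" and "\<forall>r\<in>J. G (F r) = r" and "\<forall>t\<in>I. F (G t) = t"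
  shows "(\<forall>p :: nat \<Rightarrow> real. p 0 \<in> I \<longrightarrow>
            scalar_curvature 3 (mwp_metric (\<lambda>t. N (G t)) G) p = lam)
         \<longleftrightarrow> (\<exists>c1 c2. \<forall>r\<in>J. (N r)\<^sup>2 = - c1 / r + lam / 6 * r\<^sup>2 + c2)"
proof -
  obtain N' N'' where N': "\<And>r. r \<in> J \<Longrightarrow> (N has_real_derivative N' r) (at r)"
    and N'': "\<And>r. r \<in> J \<Longrightarrow> (N' has_real_derivative N'' r) (at r)"
    using Cinf_on_second_derivative[OF assms(5)] by blast
  obtain G' where "\<And>t. t \<in> I \<Longrightarrow> (G has_real_derivative G' t) (at t)"
    using Cinf_on_second_derivative[OF assms(10)] by blast
  moreover have "continuous_on J N" using N' DERIV_isCont continuous_at_imp_continuous_on by blast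
  moreover have "\<And>r. r \<in> J \<Longrightarrow> N r \<noteq> 0" using assms(6) by force
  ultimately have "open (F ` J)" "\<And>t. t \<in> F ` J \<Longrightarrow> (G has_real_derivative N (G t)) (at t)"
    using inverse_of_reciprocal_integral[OF assms(1,2,7) _ _ assms(8,11)] assms(12)
    unfolding assms(9) by blast+
  then have "open I" and G': "\<And>t. t \<in> I \<Longrightarrow> (G has_real_derivative N (G t)) (at t)"
    unfolding assms(9) by blast+
  have "(\<forall>p :: nat \<Rightarrow> real. p 0 \<in> I \<longrightarrow>
            scalar_curvature 3 (mwp_metric (\<lambda>t. N (G t)) G) p = lam)
      \<longleftrightarrow> (\<forall>r\<in>J. 2 * (N' r * N' r + N r * N'' r) + 2 * (2 * N r * N' r) / r = lam)"
  proof (rule eq_const_on_chart_iff)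
    show "G ` I = J" using assms(9,11) by force
    show "scalar_curvature 3 (mwp_metric (\<lambda>t. N (G t)) G) p =
        2 * (N' r * N' r + N r * N'' r) + 2 * (2 * N r * N' r) / r" if "p 0 \<in> I" "G (p 0) = r" for p r
      by (rule scalar_curvature_lapse_warped[where J = J])
        (use \<open>open I\<close> G' N' N'' assms(4,6,9,11) that in fastforce)+
  qed
  also have "\<dots> \<longleftrightarrow> (\<exists>c1 c2. \<forall>r\<in>J. (N r)\<^sup>2 = - c1 / r + lam / 6 * r\<^sup>2 + c2)"
    by (rule radial_laplacian_eq_const_iff[where u = "\<lambda>r. (N r)\<^sup>2" and u' = "\<lambda>r. 2 * N r * N' r"
          and u'' = "\<lambda>r. 2 * (N' r * N' r + N r * N'' r)", OF assms(1,2,4)])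
      (use N' N'' in \<open>auto intro!: derivative_eq_intros simp: algebra_simps\<close>)
  finally show ?thesis .
qed

end
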